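(* Let $\phi(u)=\frac{1}{\sqrt{2\pi}}e^{-u^2/2}$ and $Q(u)=\int_u^{\infty}\phi(t)\,dt$. (i) (DCO-OFDM) Fix $\sigma_y>0$ and $\epsilon_{top}\in\mathbb{R}$. The function $$P_{DCO}(\epsilon_B)=\epsilon_B\sigma_y+\sigma_y\big[\phi(\epsilon_B)-\phi(\epsilon_{top}-\epsilon_B)+(\epsilon_{top}-\epsilon_B)\phi(\epsilon_{top}-\epsilon_B)-\epsilon_B Q(\epsilon_B)\big],\qquad \epsilon_B\in\mathbb{R},$$ is not convex. (ii) (ACO-OFDM) Fix $y_{max}>0$ and an integer $m\ge 1$. For $\mathbf{w}=(w_1,\dots,w_m)\in\mathbb{R}^m\setminus\{0\}$ let $\sigma_y=\sqrt{\sum_{i=1}^m w_i^2}$ and $\epsilon_{top}=y_{max}/\sigma_y$. The function $$P_{ACO}(\mathbf{w})=\frac{\sigma_y}{\sqrt{2\pi}}+\sigma_y\big[\epsilon_{top}Q(\epsilon_{top})-\phi(\epsilon_{top})\big]$$ is not convex on $\mathbb{R}^m\setminus\{0\}$, i.e., there is a line segment contained in $\mathbb{R}^m\setminus\{0\}$ on which the restriction of $P_{ACO}$ is not convex.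
   Context: These functions are the mean transmitted optical power constraints in the subcarrier power allocation problems: for DCO-OFDM, $P_{DCO}=B_{DC}+\beta_{DCO}$ with DC bias $B_{DC}=\epsilon_B\sigma_y$, bias level $\epsilon_B$, top clipping level $\epsilon_{top}$ (peak power $y_{max}=\epsilon_{top}\sigma_y$), and $\sigma_y$ the RMS of the time-domain OFDM signal; for ACO-OFDM, $\sigma_y=\sqrt{\sum w_i^2}$ where $w_i$ are the subcarrier amplitude scale coefficients and $y_{max}$ is the fixed peak power. The lemma asserts that these constraint functions are non-convex. *)

theory Defs
  imports "HOL-Analysis.Analysis"
begin

definition gauss_phi :: "real \<Rightarrow> real" where
  "gauss_phi u = exp (- (u\<^sup>2) / 2) / sqrt (2 * pi)"

definition gauss_Q :: "real \<Rightarrow> real" where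
  "gauss_Q u = integral {u..} gauss_phi"

definition P_DCO :: "real \<Rightarrow> real \<Rightarrow> real \<Rightarrow> real" where
  "P_DCO \<sigma>y \<epsilon>top \<epsilon>B =
     \<epsilon>B * \<sigma>y + \<sigma>y * (gauss_phi \<epsilon>B - gauss_phi (\<epsilon>top - \<epsilon>B)
        + (\<epsilon>top - \<epsilon>B) * gauss_phi (\<epsilon>top - \<epsilon>B) - \<epsilon>B * gauss_Q \<epsilon>B)"

definition sigma_y :: "real ^ 'n \<Rightarrow> real" where
  "sigma_y w = sqrt (\<Sum>i\<in>UNIV. (w $ i)\<^sup>2)"

definition P_ACO :: "real \<Rightarrow> real ^ 'n \<Rightarrow> real" where
  "P_ACO ymax w =
     (let \<sigma> = sigma_y w; et = ymax / \<sigma>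
      in \<sigma> / sqrt (2 * pi) + \<sigma> * (et * gauss_Q et - gauss_phi et))"

end

theory Submission
  imports Defs
begin

(*
  Both functions have a negative second derivative somewhere.
  For P_DCO, at eps_B = eps_top - 1 the second derivative is
  sigma_y (phi (eps_top - 1) - 2 phi 1), negative because phi <= phi 0 < 2 phi 1, i.e. e^(1/2) < 2.
  P_ACO depends on w only through sigma = norm w, via
  g sigma = sigma / sqrt (2 pi) + ymax Q (ymax / sigma) - sigma phi (ymax / sigma),
  with g' sigma = 1 / sqrt (2 pi) - phi (ymax / sigma) and
  g'' sigma = - ymax^2 / sigma^3 phi (ymax / sigma) < 0.  So P_ACO is strictly concave along every
  ray from the origin, and any segment of such a ray avoiding 0 witnesses non-convexity.
*)

lemma gauss_phi_pos: "gauss_phi x > 0"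
  unfolding gauss_phi_def by simp

lemma gauss_phi_le_gauss_phi_0: "gauss_phi x \<le> gauss_phi 0"
  unfolding gauss_phi_def by (simp add: divide_right_mono)

lemma gauss_phi_lt_twice_gauss_phi_1: "gauss_phi x < 2 * gauss_phi 1"
proof -
  have "exp (1/2) < exp (ln (2::real))"
    using ln2_ge_two_thirds by (subst exp_less_cancel_iff) linarith
  then have "1 < 2 * exp (- 1/2 :: real)"
    by (simp add: exp_minus field_simps)
  then have "gauss_phi 0 < 2 * gauss_phi 1"
    unfolding gauss_phi_def by (simp add: divide_strict_right_mono)
  with gauss_phi_le_gauss_phi_0 show ?thesis
    by (rule le_less_trans)
qed

lemma continuous_on_gauss_phi: "continuous_on S gauss_phi"
  unfolding gauss_phi_def by (intro continuous_intros) auto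

lemma gauss_phi_has_real_derivative [derivative_intros]:
  "(g has_real_derivative g') (at x within S) \<Longrightarrow>
   ((\<lambda>x. gauss_phi (g x)) has_real_derivative - g x * gauss_phi (g x) * g') (at x within S)"
  unfolding gauss_phi_def
  by (auto intro!: derivative_eq_intros simp: power2_eq_square field_simps)

lemma gauss_phi_integrable_on_atLeast: "gauss_phi integrable_on {a..}"
proof (rule integrable_on_all_intervals_integrable_bound)
  fix c d :: real
  have "gauss_phi integrable_on ({a..} \<inter> cbox c d)"
    using continuous_on_gauss_phi by (simp add: integrable_continuous_interval)
  then show "(\<lambda>x. if x \<in> {a..} then gauss_phi x else 0) integrable_on cbox c d"
    using integrable_restrict_Int by blast
next
  fix x :: real
  have "- (x\<^sup>2) / 2 \<le> 1/2 + - 1 * x"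
    using sum_power2_ge_zero[of "x - 1" 0] by (simp add: power2_eq_square algebra_simps)
  then have "exp (- (x\<^sup>2) / 2) \<le> exp (1/2) * exp (- 1 * x)"
    by (simp flip: exp_add)
  then show "norm (gauss_phi x) \<le> exp (1/2) / sqrt (2*pi) * exp (- 1 * x)"
    unfolding gauss_phi_def by (simp add: divide_right_mono)
next
  show "(\<lambda>x. exp (1/2) / sqrt (2*pi) * exp (- 1 * x)) integrable_on {a..}"
    by (intro integrable_on_mult_right integrable_on_exp_minus_to_infinity) auto
qed

lemma gauss_Q_split:
  assumes "a \<le> e"
  shows "gauss_Q a = integral {a..e} gauss_phi + gauss_Q e"
proof -
  have "(gauss_phi has_integral (integral {a..e} gauss_phi + gauss_Q e)) ({a..e} \<union> {e..})"
    unfolding gauss_Q_def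
    by (intro has_integral_Un integrable_integral gauss_phi_integrable_on_atLeast
          integrable_continuous_interval continuous_on_gauss_phi)
       (auto intro: negligible_subset[OF negligible_sing[of e]])
  moreover have "{a..e} \<union> {e..} = {a..}"
    using assms by auto
  ultimately show ?thesis
    unfolding gauss_Q_def[of a] by (simp add: integral_unique)
qed

lemma gauss_Q_has_real_derivative_at: "(gauss_Q has_real_derivative - gauss_phi x) (at x)"
proof -
  have "((\<lambda>e. integral {x-1..e} gauss_phi) has_real_derivative gauss_phi x) (at x within {x-1..x+1})"
    by (intro integral_has_real_derivative continuous_on_gauss_phi) auto
  then have deriv:
      "((\<lambda>e. gauss_Q (x-1) - integral {x-1..e} gauss_phi) has_real_derivative - gauss_phi x) (at x)"
    by (auto simp: at_within_Icc_at intro!: derivative_eq_intros)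
  have "gauss_Q (x-1) - integral {x-1..e} gauss_phi = gauss_Q e" if "e \<in> {x-1<..}" for e
    using gauss_Q_split[of "x - 1" e] that by simp
  then show ?thesis
    by (intro has_field_derivative_transform_within_open[OF deriv, of "{x-1<..}"]) auto
qed

lemma gauss_Q_has_real_derivative [derivative_intros]:
  "(g has_real_derivative g') (at x within S) \<Longrightarrow>
   ((\<lambda>x. gauss_Q (g x)) has_real_derivative - gauss_phi (g x) * g') (at x within S)"
  using DERIV_chain2[OF gauss_Q_has_real_derivative_at] by blast

lemma convex_on_derivative_mono:
  fixes f :: "real \<Rightarrow> real"
  assumes convex: "convex_on S f" and xy: "x \<in> interior S" "y \<in> interior S" "x < y"
    and deriv: "(f has_real_derivative f'x) (at x within S)" "(f has_real_derivative f'y) (at y within S)"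
  shows "f'x \<le> f'y"
proof -
  have "connected S"
    using convex by (simp add: convex_connected convex_on_imp_convex)
  then have "f y - f x \<ge> f'x * (y - x)" "f x - f y \<ge> f'y * (x - y)"
    using xy interior_subset
    by (blast intro: convex_on_imp_above_tangent[OF convex] deriv)+
  then have "(f'x - f'y) * (y - x) \<le> 0"
    by (simp add: algebra_simps)
  with \<open>x < y\<close> show ?thesis
    by (simp add: mult_le_0_iff)
qed

lemma not_convex_on_if_second_derivative_neg:
  fixes f f' :: "real \<Rightarrow> real"
  assumes "open S" "c \<in> S"
    and deriv: "\<And>x. x \<in> S \<Longrightarrow> (f has_real_derivative f' x) (at x)"
    and deriv2: "(f' has_real_derivative d) (at c)" and "d < 0"
  shows "\<not> convex_on S f"
proof
  assume convex: "convex_on S f"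
  obtain e where "e > 0" and e: "ball c e \<subseteq> S"
    using \<open>open S\<close> \<open>c \<in> S\<close> open_contains_ball by blast
  obtain d1 where "d1 > 0" and d1: "\<And>h. h > 0 \<Longrightarrow> h < d1 \<Longrightarrow> f' (c + h) < f' c"
    using DERIV_neg_dec_right[OF deriv2 \<open>d < 0\<close>] by blast
  define h where "h = min d1 e / 2"
  have "h > 0" "h < d1" "h < e"
    using \<open>e > 0\<close> \<open>d1 > 0\<close> by (simp_all add: h_def)
  then have "c + h \<in> S"
    using e by (auto simp: dist_real_def)
  have "f' c \<le> f' (c + h)"
    using \<open>h > 0\<close> \<open>c + h \<in> S\<close> \<open>open S\<close> \<open>c \<in> S\<close>
    by (intro convex_on_derivative_mono[OF convex, of c "c + h"];
        simp add: interior_open has_field_derivative_at_within deriv)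
  with d1[OF \<open>h > 0\<close> \<open>h < d1\<close>] show False
    by simp
qed

lemma convex_on_compose_linear:
  fixes h :: "'a::real_vector \<Rightarrow> 'b::real_vector" and F :: "'b \<Rightarrow> real"
  assumes "linear h" "convex S" "convex_on (h ` S) F"
  shows "convex_on S (\<lambda>x. F (h x))"
proof (rule convex_onI)
  show "convex S" by fact
next
  fix t :: real and x y
  assume "0 < t" "t < 1" "x \<in> S" "y \<in> S"
  then show "F (h ((1 - t) *\<^sub>R x + t *\<^sub>R y)) \<le> (1 - t) * F (h x) + t * F (h y)"
    using convex_onD[OF assms(3), of t "h x" "h y"]
    by (simp add: linear_add[OF \<open>linear h\<close>] linear_scale[OF \<open>linear h\<close>])
qed

lemma convex_on_cong:
  assumes "convex_on S f" "\<And>x. x \<in> S \<Longrightarrow> f x = g x"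
  shows "convex_on S g"
proof (rule convex_onI)
  show "convex S"
    using assms(1) by (rule convex_on_imp_convex)
  fix t :: real and x y
  assume "0 < t" "t < 1" "x \<in> S" "y \<in> S"
  then show "g ((1 - t) *\<^sub>R x + t *\<^sub>R y) \<le> (1 - t) * g x + t * g y"
    using convex_onD[OF assms(1), of t x y] \<open>convex S\<close> assms(2)
    by (simp add: convexD_alt)
qed

lemma closed_segment_scaleR_left:
  fixes v :: "'a::real_vector"
  assumes "a \<le> b"
  shows "closed_segment (a *\<^sub>R v) (b *\<^sub>R v) = (\<lambda>t. t *\<^sub>R v) ` {a..b}"
  using closed_segment_linear_image[OF linear_scaleR_left[of v], of a b] assms
  by (simp add: closed_segment_eq_real_ivl1)

lemma closed_segment_scaleR_subset_nonzero:
  fixes v :: "'a::real_vector"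
  assumes "v \<noteq> 0" "0 < a" "a \<le> b"
  shows "closed_segment (a *\<^sub>R v) (b *\<^sub>R v) \<subseteq> UNIV - {0}"
  using assms by (auto simp: closed_segment_scaleR_left)

lemma P_DCO_has_real_derivative:
  "(P_DCO \<sigma> t has_real_derivative
     \<sigma> * (1 - gauss_Q e - gauss_phi (t - e) * (1 + (t - e) - (t - e)\<^sup>2))) (at e)"
  unfolding P_DCO_def [abs_def]
  by (auto intro!: derivative_eq_intros simp: algebra_simps power2_eq_square)

lemma P_DCO_second_derivative:
  "((\<lambda>e. \<sigma> * (1 - gauss_Q e - gauss_phi (t - e) * (1 + (t - e) - (t - e)\<^sup>2)))
     has_real_derivative \<sigma> * (gauss_phi (t - 1) - 2 * gauss_phi 1)) (at (t - 1))"
  by (auto intro!: derivative_eq_intros)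

lemma P_DCO_not_convex:
  assumes "\<sigma> > 0"
  shows "\<not> convex_on UNIV (P_DCO \<sigma> t)"
  using gauss_phi_lt_twice_gauss_phi_1[of "t - 1"] assms
  by (intro not_convex_on_if_second_derivative_neg[OF _ _ P_DCO_has_real_derivative
        P_DCO_second_derivative]) (auto simp: mult_pos_neg)

text \<open>P_ACO as a function of sigma_y, with sigma_y * eps_top = ymax multiplied out; this agrees with
  P_ACO only for w \<noteq> 0.\<close>
definition P_ACO_radial :: "real \<Rightarrow> real \<Rightarrow> real" where
  "P_ACO_radial ymax \<sigma> = \<sigma> / sqrt (2 * pi) + ymax * gauss_Q (ymax / \<sigma>) - \<sigma> * gauss_phi (ymax / \<sigma>)"

lemma sigma_y_eq_norm: "sigma_y w = norm w"
  unfolding sigma_y_def norm_vec_def L2_set_def by simp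

lemma P_ACO_eq_radial:
  assumes "w \<noteq> 0"
  shows "P_ACO ymax w = P_ACO_radial ymax (norm w)"
  using assms by (simp add: P_ACO_def P_ACO_radial_def sigma_y_eq_norm Let_def algebra_simps)

lemma P_ACO_radial_has_real_derivative:
  assumes "\<sigma> \<noteq> 0"
  shows "(P_ACO_radial ymax has_real_derivative 1 / sqrt (2 * pi) - gauss_phi (ymax / \<sigma>)) (at \<sigma>)"
  unfolding P_ACO_radial_def [abs_def] using assms
  by (auto intro!: derivative_eq_intros simp: power2_eq_square field_simps)

lemma P_ACO_radial_second_derivative:
  assumes "\<sigma> \<noteq> 0"
  shows "((\<lambda>s. 1 / sqrt (2 * pi) - gauss_phi (ymax / s)) has_real_derivative
           - (ymax\<^sup>2 / \<sigma> ^ 3) * gauss_phi (ymax / \<sigma>)) (at \<sigma>)"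
  using assms by (auto intro!: derivative_eq_intros simp: power2_eq_square power3_eq_cube mult_ac)

lemma P_ACO_radial_not_convex:
  assumes "ymax \<noteq> 0" "open S" "S \<noteq> {}" "S \<subseteq> {0<..}"
  shows "\<not> convex_on S (P_ACO_radial ymax)"
proof -
  obtain c where "c \<in> S" "c > 0"
    using assms(3,4) by blast
  have "- (ymax\<^sup>2 / c ^ 3) * gauss_phi (ymax / c) < 0"
    using \<open>c > 0\<close> assms(1) gauss_phi_pos[of "ymax / c"] by simp
  then show ?thesis
    using assms(2,4) \<open>c \<in> S\<close> \<open>c > 0\<close>
    by (intro not_convex_on_if_second_derivative_neg[OF _ _ P_ACO_radial_has_real_derivative
          P_ACO_radial_second_derivative]) auto
qed

lemma P_ACO_not_convex_on_ray_segment: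
  fixes v :: "real ^ 'n"
  assumes "ymax \<noteq> 0" "norm v = 1" "0 < a" "a < b"
  shows "\<not> convex_on (closed_segment (a *\<^sub>R v) (b *\<^sub>R v)) (P_ACO ymax)"
proof
  assume "convex_on (closed_segment (a *\<^sub>R v) (b *\<^sub>R v)) (P_ACO ymax)"
  then have "convex_on {a..b} (\<lambda>t. P_ACO ymax (t *\<^sub>R v))"
    using assms(4)
    by (intro convex_on_compose_linear[OF linear_scaleR_left, of "{a..b}" v "P_ACO ymax"])
       (auto simp: closed_segment_scaleR_left)
  then have "convex_on {a<..<b} (\<lambda>t. P_ACO ymax (t *\<^sub>R v))"
    by (rule convex_on_subset) auto
  moreover have "P_ACO ymax (t *\<^sub>R v) = P_ACO_radial ymax t" if "t \<in> {a<..<b}" for t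
    using that assms by (subst P_ACO_eq_radial) auto
  ultimately have "convex_on {a<..<b} (P_ACO_radial ymax)"
    by (rule convex_on_cong)
  moreover have "{a<..<b} \<subseteq> {0<..}"
    using assms(3) by auto
  ultimately show False
    using P_ACO_radial_not_convex[of ymax "{a<..<b}"] assms by auto
qed

theorem lemma1:
  shows "(\<forall>\<sigma>y \<epsilon>top :: real. \<sigma>y > 0 \<longrightarrow> \<not> convex_on UNIV (P_DCO \<sigma>y \<epsilon>top))
       \<and> (\<forall>ymax :: real. ymax > 0 \<longrightarrow>
           (\<exists>a b :: real ^ 'n. closed_segment a b \<subseteq> UNIV - {0}
              \<and> \<not> convex_on (closed_segment a b) (P_ACO ymax)))"
proof (intro conjI allI impI)
  fix \<sigma>y \<epsilon>top :: real
  assume "\<sigma>y > 0"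
  then show "\<not> convex_on UNIV (P_DCO \<sigma>y \<epsilon>top)"
    by (rule P_DCO_not_convex)
next
  fix ymax :: real
  assume "ymax > 0"
  \<comment> \<open>any unit vector will do; \<open>undefined\<close> is merely some coordinate of \<open>'n\<close>\<close>
  define v :: "real ^ 'n" where "v = axis undefined 1"
  have "norm v = 1"
    by (simp add: v_def)
  then show "\<exists>a b :: real ^ 'n. closed_segment a b \<subseteq> UNIV - {0}
              \<and> \<not> convex_on (closed_segment a b) (P_ACO ymax)"
    using \<open>ymax > 0\<close>
    by (intro exI[of _ "1 *\<^sub>R v"] exI[of _ "2 *\<^sub>R v"] conjI
          closed_segment_scaleR_subset_nonzero P_ACO_not_convex_on_ray_segment) auto
qed

end
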